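(* Let $f$ be a finite sequence of positive integers. The following are equivalent: (1) $f$ is the face vector of a flag complex; (2) $f$ is the $h$-vector (with trailing zeros removed) of $\mathrm{Ind}(G^\pi)$ for some non-empty graph $G$ and some clique vertex-partition $\pi$ of $G$; (3) $f$ is the $h$-vector (with trailing zeros removed) of $\mathrm{Ind}(G^\tau)$ for some non-empty graph $G$, where $\tau$ is the trivial partition of $G$ (i.e. $G^\tau$ is the fully-whiskered graph).
   Context: A flag complex is a simplicial complex whose Stanley–Reisner ideal is generated by quadratic monomials, equivalently one of the form $\mathrm{Ind}(G)$, the complex of independent sets of a graph $G$. A clique vertex-partition of $G=(V,E)$ is a set $\pi=\{W_1,\ldots,W_t\}$ of pairwise disjoint (possibly empty) cliques of $G$ whose union is $V$; $G^\pi$ is the graph with vertex set $V\cup\{w_1,\ldots,w_t\}$ ($w_i$ new) and edge set $E\cup\{vw_i : v\in W_i\}$. The trivial partition of $G$ with $V=\{v_1,\ldots,v_n\}$ is $\tau=\{\{v_1\},\ldots,\{v_n\}\}$, so $G^\tau$ attaches a new degree-one vertex to each vertex of $G$. For a $(d-1)$-dimensional complex, the face vector is $(f_{-1},\ldots,f_{d-1})$, $f_i$ = number of faces with $i+1$ elements, and the $h$-vector is $(h_0,\ldots,h_d)$, $h_j=\sum_{i=0}^{j}(-1)^{j-i}\binom{d-i}{j-i}f_{i-1}$. *)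

theory Defs
  imports Main
begin

definition simplicial_complex :: "'a set \<Rightarrow> 'a set set \<Rightarrow> bool" where
  "simplicial_complex V \<Delta> \<longleftrightarrow> finite V \<and> {} \<in> \<Delta> \<and> (\<forall>\<sigma>\<in>\<Delta>. \<sigma> \<subseteq> V) \<and>
     (\<forall>\<sigma>\<in>\<Delta>. \<forall>\<tau>. \<tau> \<subseteq> \<sigma> \<longrightarrow> \<tau> \<in> \<Delta>)"

text \<open>Minimal non-faces = minimal generators of the Stanley--Reisner ideal.\<close>
definition minimal_nonface :: "'a set \<Rightarrow> 'a set set \<Rightarrow> 'a set \<Rightarrow> bool" where
  "minimal_nonface V \<Delta> \<sigma> \<longleftrightarrow> \<sigma> \<subseteq> V \<and> \<sigma> \<notin> \<Delta> \<and> (\<forall>\<tau>. \<tau> \<subset> \<sigma> \<longrightarrow> \<tau> \<in> \<Delta>)"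

text \<open>Flag complex: Stanley--Reisner ideal generated by quadratic monomials,
  i.e. every minimal non-face has exactly two elements.\<close>
definition flag_complex :: "'a set \<Rightarrow> 'a set set \<Rightarrow> bool" where
  "flag_complex V \<Delta> \<longleftrightarrow> simplicial_complex V \<Delta> \<and>
     (\<forall>\<sigma>. minimal_nonface V \<Delta> \<sigma> \<longrightarrow> card \<sigma> = 2)"

text \<open>d = (dimension + 1) = maximal cardinality of a face.\<close>
definition cx_d :: "'a set set \<Rightarrow> nat" where
  "cx_d \<Delta> = Max (card ` \<Delta>)"

text \<open>Number of faces with i elements, i.e. f_{i-1}.\<close>
definition nfaces :: "'a set set \<Rightarrow> nat \<Rightarrow> nat" where
  "nfaces \<Delta> i = card {\<sigma>\<in>\<Delta>. card \<sigma> = i}"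

text \<open>Face vector (f_{-1}, ..., f_{d-1}).\<close>
definition face_vector :: "'a set set \<Rightarrow> nat list" where
  "face_vector \<Delta> = map (nfaces \<Delta>) [0..<cx_d \<Delta> + 1]"

definition h_vector :: "'a set set \<Rightarrow> int list" where
  "h_vector \<Delta> = (let d = cx_d \<Delta> in
     map (\<lambda>j. \<Sum>i=0..j. (-1) ^ (j - i) * int ((d - i) choose (j - i)) * int (nfaces \<Delta> i))
         [0..<d + 1])"

definition strip_trailing_zeros :: "int list \<Rightarrow> int list" where
  "strip_trailing_zeros xs = rev (dropWhile (\<lambda>x. x = 0) (rev xs))"

definition simple_graph :: "'a set \<Rightarrow> 'a set set \<Rightarrow> bool" where
  "simple_graph V E \<longleftrightarrow> finite V \<and> (\<forall>e\<in>E. e \<subseteq> V \<and> card e = 2)"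

definition Ind :: "'a set \<Rightarrow> 'a set set \<Rightarrow> 'a set set" where
  "Ind V E = {S. S \<subseteq> V \<and> (\<forall>e\<in>E. \<not> e \<subseteq> S)}"

definition is_clique :: "'a set set \<Rightarrow> 'a set \<Rightarrow> bool" where
  "is_clique E W \<longleftrightarrow> (\<forall>u\<in>W. \<forall>v\<in>W. u \<noteq> v \<longrightarrow> {u, v} \<in> E)"

text \<open>A clique vertex-partition, given as the list [W_1, ..., W_t] of its
  (distinct, pairwise disjoint, possibly empty) cliques.\<close>
definition clique_vertex_partition :: "'a set \<Rightarrow> 'a set set \<Rightarrow> 'a set list \<Rightarrow> bool" where
  "clique_vertex_partition V E Ws \<longleftrightarrow> distinct Ws \<and>
     (\<forall>W\<in>set Ws. W \<subseteq> V \<and> is_clique E W) \<and>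
     (\<forall>i<length Ws. \<forall>j<length Ws. i \<noteq> j \<longrightarrow> Ws ! i \<inter> Ws ! j = {}) \<and>
     \<Union>(set Ws) = V"

text \<open>G^pi: old vertices Inl v, new vertices w_i = Inr i.\<close>
definition gpi_V :: "'a set \<Rightarrow> 'a set list \<Rightarrow> ('a + nat) set" where
  "gpi_V V Ws = Inl ` V \<union> Inr ` {..<length Ws}"

definition gpi_E :: "'a set set \<Rightarrow> 'a set list \<Rightarrow> ('a + nat) set set" where
  "gpi_E E Ws = (image Inl) ` E \<union> {{Inl v, Inr i} | v i. i < length Ws \<and> v \<in> Ws ! i}"

definition trivial_partition :: "'a::linorder set \<Rightarrow> 'a set list" where
  "trivial_partition V = map (\<lambda>v. {v}) (sorted_list_of_set V)"

end

theory Submission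
  imports Defs
begin

(* Every flag complex is the independence complex Ind(G) of a graph G (its
   non-edges are the minimal non-faces), and conversely.  So it suffices to show,
   for a graph G and any clique vertex-partition pi = [W_1,...,W_t] of G, that
   the h-vector of Ind(G^pi), with trailing zeros removed, is the face vector
   of Ind(G).

   A face of Ind(G^pi) is a pair (S, T): an independent set S of G together
   with a set T of new vertices w_j whose clique W_j misses S.  An independent
   set meets at most one vertex of each clique, hence meets exactly |S| of
   them, so f_{i-1}(Ind(G^pi)) = sum_S binom(t - |S|, i - |S|) and Ind(G^pi)
   has dimension t - 1.  Substituting this into the definition of h_j, a
   binomial inversion identity collapses the double sum to f_{j-1}(Ind(G)).
   The h-vector thus is the face vector of Ind(G) padded with zeros, which
   stripping removes.  The trivial partition is one particular clique
   vertex-partition, which gives the equivalence with the third condition. *)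

section \<open>A binomial inversion identity\<close>

lemma alternating_choose_sum:
  "(\<Sum>k\<le>m. (-1::int) ^ (m - k) * int (m choose k)) = (if m = 0 then 1 else 0)"
  using binomial_ring[of "1::int" "-1" m] by (simp add: mult.commute power_0_left)

text \<open>The matrices (binom(t-s, i-s)) and ((-1)^(j-i) binom(t-i, j-i)) are
  mutually inverse; this is what turns f-numbers of Ind(G^pi) into h-numbers.\<close>
lemma choose_inversion:
  assumes "s \<le> t" "j \<le> (t::nat)"
  shows "(\<Sum>i=0..j. (-1::int) ^ (j - i) * int ((t - i) choose (j - i)) *
            int (if s \<le> i then (t - s) choose (i - s) else 0)) = (if s = j then 1 else 0)"
proof (cases "s \<le> j")
  case False
  then show ?thesis by (intro trans[OF sum.neutral]) auto
next
  case True
  define m n where "m = j - s" and "n = t - s"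
  have "m \<le> n" using assms True by (simp add: m_def n_def)
  have "(\<Sum>i=0..j. (-1::int) ^ (j - i) * int ((t - i) choose (j - i)) *
            int (if s \<le> i then (t - s) choose (i - s) else 0))
      = (\<Sum>i=s..j. (-1::int) ^ (j - i) * int ((t - i) choose (j - i)) * int (n choose (i - s)))"
    using True by (subst sum.mono_neutral_right[of "{0..j}" "{s..j}"]) (auto simp: n_def)
  also have "\<dots> = (\<Sum>k=0..m. (-1::int) ^ (m - k) * int ((n - k) choose (m - k)) * int (n choose k))"
    using True sum.shift_bounds_cl_nat_ivl[of
        "\<lambda>i. (-1::int) ^ (j - i) * int ((t - i) choose (j - i)) * int (n choose (i - s))" 0 s m]
    by (simp add: m_def n_def add.commute diff_diff_eq)
  also have "\<dots> = (\<Sum>k\<le>m. (-1::int) ^ (m - k) * (int (n choose m) * int (m choose k)))"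
  proof (rule sum.cong)
    fix k assume "k \<in> {..m}"
    then have "(n choose k) * ((n - k) choose (m - k)) = (n choose m) * (m choose k)"
      using choose_mult[of k m n] \<open>m \<le> n\<close> by simp
    then show "(-1::int) ^ (m - k) * int ((n - k) choose (m - k)) * int (n choose k)
        = (-1) ^ (m - k) * (int (n choose m) * int (m choose k))"
      by (metis (no_types, lifting) mult.assoc mult.commute of_nat_mult)
  qed (simp add: atLeast0AtMost)
  also have "\<dots> = int (n choose m) * (\<Sum>k\<le>m. (-1::int) ^ (m - k) * int (m choose k))"
    by (simp add: sum_distrib_left algebra_simps)
  also have "\<dots> = (if m = 0 then 1 else 0)"
    by (simp add: alternating_choose_sum)
  also have "\<dots> = (if s = j then 1 else 0)"
    using True by (simp add: m_def)
  finally show ?thesis .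
qed

section \<open>Face numbers of simplicial complexes\<close>

lemma finite_complex:
  assumes "simplicial_complex V \<Delta>"
  shows "finite \<Delta>"
proof (rule finite_subset)
  show "\<Delta> \<subseteq> Pow V" and "finite (Pow V)" using assms by (auto simp: simplicial_complex_def)
qed

lemma cx_d_attained:
  assumes "simplicial_complex V \<Delta>"
  obtains \<sigma> where "\<sigma> \<in> \<Delta>" "card \<sigma> = cx_d \<Delta>"
proof -
  have "cx_d \<Delta> \<in> card ` \<Delta>"
    unfolding cx_d_def using assms finite_complex[OF assms]
    by (intro Max_in) (auto simp: simplicial_complex_def)
  then show ?thesis using that by (auto simp: image_iff)
qed

lemma card_le_cx_d: "simplicial_complex V \<Delta> \<Longrightarrow> \<sigma> \<in> \<Delta> \<Longrightarrow> card \<sigma> \<le> cx_d \<Delta>"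
  unfolding cx_d_def by (simp add: finite_complex)

text \<open>A complex has faces of every size up to cx_d (shrink a largest face) ...\<close>
lemma nfaces_pos:
  assumes sc: "simplicial_complex V \<Delta>" and "j \<le> cx_d \<Delta>"
  shows "nfaces \<Delta> j > 0"
proof -
  obtain \<sigma> where \<sigma>: "\<sigma> \<in> \<Delta>" "card \<sigma> = cx_d \<Delta>" using cx_d_attained[OF sc] .
  obtain \<tau> where "\<tau> \<subseteq> \<sigma>" "card \<tau> = j"
    using obtain_subset_with_card_n[of j \<sigma>] \<sigma>(2) \<open>j \<le> cx_d \<Delta>\<close> by auto
  then have "\<tau> \<in> {\<rho> \<in> \<Delta>. card \<rho> = j}"
    using sc \<sigma>(1) by (auto simp: simplicial_complex_def)
  then show ?thesis
    unfolding nfaces_def using finite_complex[OF sc] by (auto simp: card_gt_0_iff)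
qed

lemma nfaces_zero:
  assumes "simplicial_complex V \<Delta>" "cx_d \<Delta> < j"
  shows "nfaces \<Delta> j = 0"
proof -
  have "{\<sigma> \<in> \<Delta>. card \<sigma> = j} = {}" using card_le_cx_d[OF assms(1)] assms(2) by fastforce
  then show ?thesis unfolding nfaces_def by (metis card.empty)
qed

lemma strip_trailing_zeros_append:
  assumes "\<forall>y\<in>set ys. y = 0" "xs \<noteq> []" "last xs \<noteq> 0"
  shows "strip_trailing_zeros (xs @ ys) = xs"
proof -
  have "dropWhile (\<lambda>x. x = 0) (rev xs) = rev xs"
    using assms(2,3) by (cases xs rule: rev_cases) auto
  moreover have "dropWhile (\<lambda>x. x = 0) (rev ys @ rev xs) = dropWhile (\<lambda>x. x = 0) (rev xs)"
    using assms(1) by (intro dropWhile_append2) auto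
  ultimately show ?thesis unfolding strip_trailing_zeros_def by simp
qed

lemma strip_padded_face_vector:
  assumes sc: "simplicial_complex V \<Delta>" and "cx_d \<Delta> \<le> t"
  shows "strip_trailing_zeros (map (\<lambda>j. int (nfaces \<Delta> j)) [0..<t + 1]) = map int (face_vector \<Delta>)"
proof -
  let ?d = "cx_d \<Delta>" and ?n = "\<lambda>j. int (nfaces \<Delta> j)"
  have "[0..<t + 1] = [0..<?d + 1] @ [?d + 1..<t + 1]"
    using upt_add_eq_append[of 0 "?d + 1" "t - ?d"] \<open>?d \<le> t\<close> by simp
  then have "map ?n [0..<t + 1] = map ?n [0..<?d + 1] @ map ?n [?d + 1..<t + 1]" by simp
  also have "strip_trailing_zeros \<dots> = map ?n [0..<?d + 1]"
    using nfaces_zero[OF sc] nfaces_pos[OF sc, of ?d]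
    by (intro strip_trailing_zeros_append) auto
  finally show ?thesis by (simp add: face_vector_def)
qed

section \<open>Flag complexes are independence complexes\<close>

lemma simplicial_complex_Ind:
  assumes "finite V" "{} \<notin> E"
  shows "simplicial_complex V (Ind V E)"
  using assms unfolding simplicial_complex_def Ind_def by auto

lemma simplicial_complex_Ind_graph:
  assumes "simple_graph V E"
  shows "simplicial_complex V (Ind V E)"
proof (rule simplicial_complex_Ind)
  show "finite V" and "{} \<notin> E" using assms by (auto simp: simple_graph_def)
qed

text \<open>The minimal non-faces of Ind(G) are precisely the edges of G.\<close>
lemma flag_complex_Ind:
  assumes sg: "simple_graph V E"
  shows "flag_complex V (Ind V E)"
proof -
  have "card \<sigma> = 2" if "minimal_nonface V (Ind V E) \<sigma>" for \<sigma>
  proof -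
    from that obtain e where e: "e \<in> E" "e \<subseteq> \<sigma>"
      by (auto simp: minimal_nonface_def Ind_def)
    have "e = \<sigma>"
    proof (rule ccontr)
      assume "e \<noteq> \<sigma>"
      then have "e \<in> Ind V E" using that e(2) by (auto simp: minimal_nonface_def)
      then show False using e(1) by (auto simp: Ind_def)
    qed
    then show ?thesis using e(1) sg by (auto simp: simple_graph_def)
  qed
  then show ?thesis using simplicial_complex_Ind_graph[OF sg] by (simp add: flag_complex_def)
qed

lemma exists_minimal_nonface:
  assumes "finite S" "S \<subseteq> V" "S \<notin> \<Delta>"
  shows "\<exists>\<sigma>\<subseteq>S. minimal_nonface V \<Delta> \<sigma>"
  using assms
proof (induction S rule: finite_psubset_induct)
  case (psubset S)
  show ?case
  proof (cases "\<forall>\<tau>. \<tau> \<subset> S \<longrightarrow> \<tau> \<in> \<Delta>")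
    case True
    then have "minimal_nonface V \<Delta> S" using psubset.prems by (simp add: minimal_nonface_def)
    then show ?thesis by blast
  next
    case False
    then obtain \<tau> where \<tau>: "\<tau> \<subset> S" "\<tau> \<notin> \<Delta>" by auto
    then have "\<tau> \<subseteq> V" using psubset.prems by auto
    then have "\<exists>\<sigma>\<subseteq>\<tau>. minimal_nonface V \<Delta> \<sigma>" using \<tau> by (intro psubset.IH)
    then show ?thesis using \<open>\<tau> \<subset> S\<close> by (meson order.trans psubset_imp_subset)
  qed
qed

text \<open>A flag complex is the independence complex of its graph of non-edges.\<close>
lemma flag_complex_is_Ind:
  assumes fl: "flag_complex V \<Delta>"
  shows "\<exists>E. simple_graph V E \<and> \<Delta> = Ind V E"
proof -
  define E where "E = {e. e \<subseteq> V \<and> card e = 2 \<and> e \<notin> \<Delta>}"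
  have sc: "simplicial_complex V \<Delta>" and two: "\<And>\<sigma>. minimal_nonface V \<Delta> \<sigma> \<Longrightarrow> card \<sigma> = 2"
    using fl by (auto simp: flag_complex_def)
  have finV: "finite V" and faces_sub: "\<And>\<sigma>. \<sigma> \<in> \<Delta> \<Longrightarrow> \<sigma> \<subseteq> V"
    and down_closed: "\<And>\<sigma> \<tau>. \<sigma> \<in> \<Delta> \<Longrightarrow> \<tau> \<subseteq> \<sigma> \<Longrightarrow> \<tau> \<in> \<Delta>"
    using sc unfolding simplicial_complex_def by blast+
  have "Ind V E \<subseteq> \<Delta>"
  proof
    fix S assume S: "S \<in> Ind V E"
    show "S \<in> \<Delta>"
    proof (rule ccontr)
      assume "S \<notin> \<Delta>"
      have "S \<subseteq> V" using S by (simp add: Ind_def)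
      then have "finite S" using finV by (rule finite_subset)
      then obtain \<sigma> where \<sigma>: "\<sigma> \<subseteq> S" "minimal_nonface V \<Delta> \<sigma>"
        using exists_minimal_nonface[OF \<open>finite S\<close> \<open>S \<subseteq> V\<close> \<open>S \<notin> \<Delta>\<close>] by blast
      then have "\<sigma> \<in> E" using two[OF \<sigma>(2)] by (simp add: E_def minimal_nonface_def)
      then show False using S \<sigma>(1) by (simp add: Ind_def)
    qed
  qed
  moreover have "\<Delta> \<subseteq> Ind V E"
  proof
    fix \<sigma> assume "\<sigma> \<in> \<Delta>"
    then have "\<sigma> \<subseteq> V" and "\<forall>e\<in>E. \<not> e \<subseteq> \<sigma>"
      using faces_sub down_closed by (auto simp: E_def)
    then show "\<sigma> \<in> Ind V E" by (simp add: Ind_def)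
  qed
  moreover have "simple_graph V E" using finV by (simp add: simple_graph_def E_def)
  ultimately show ?thesis by blast
qed

lemma flag_face_vector_iff_graph:
  "(\<exists>(V::'a set) \<Delta>. V \<noteq> {} \<and> flag_complex V \<Delta> \<and> f = face_vector \<Delta>) \<longleftrightarrow>
   (\<exists>(V::'a set) E. simple_graph V E \<and> V \<noteq> {} \<and> f = face_vector (Ind V E))"
  (is "?flag \<longleftrightarrow> ?graph")
proof
  assume ?flag
  then show ?graph
  proof (elim exE conjE)
    fix V :: "'a set" and \<Delta> assume "V \<noteq> {}" "flag_complex V \<Delta>" "f = face_vector \<Delta>"
    moreover obtain E where "simple_graph V E" "\<Delta> = Ind V E"
      using flag_complex_is_Ind[OF \<open>flag_complex V \<Delta>\<close>] by auto
    ultimately show ?graph by blast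
  qed
next
  assume ?graph
  then show ?flag using flag_complex_Ind by blast
qed

section \<open>Independent sets of the graph G^pi\<close>

lemma cvp_block_unique:
  assumes "clique_vertex_partition V E Ws" "i < length Ws" "j < length Ws" "v \<in> Ws ! i" "v \<in> Ws ! j"
  shows "i = j"
  using assms unfolding clique_vertex_partition_def by blast

lemma cvp_block_exists:
  assumes "clique_vertex_partition V E Ws" "v \<in> V"
  shows "\<exists>i<length Ws. v \<in> Ws ! i"
  using assms unfolding clique_vertex_partition_def by (metis UnionE in_set_conv_nth)

text \<open>An independent set meets each clique in at most one vertex, so it meets
  exactly as many cliques of the partition as it has elements.\<close>
lemma card_cliques_met:
  assumes cvp: "clique_vertex_partition V E Ws" and S: "S \<in> Ind V E"
  shows "card {j. j < length Ws \<and> Ws ! j \<inter> S \<noteq> {}} = card S"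
proof -
  have SV: "S \<subseteq> V" using S by (simp add: Ind_def)
  obtain blk where blk: "\<And>v. v \<in> V \<Longrightarrow> blk v < length Ws \<and> v \<in> Ws ! blk v"
    using cvp_block_exists[OF cvp] by metis
  have "inj_on blk S"
  proof (rule inj_onI, rule ccontr)
    fix u v assume u: "u \<in> S" and v: "v \<in> S" and eq: "blk u = blk v" and "u \<noteq> v"
    have "Ws ! blk u \<in> set Ws" using blk u SV by auto
    then have "is_clique E (Ws ! blk u)" using cvp by (simp add: clique_vertex_partition_def)
    moreover have "u \<in> Ws ! blk u" "v \<in> Ws ! blk u" using blk[of u] blk[of v] u v SV eq by auto
    ultimately have "{u, v} \<in> E" using \<open>u \<noteq> v\<close> unfolding is_clique_def by blast
    then show False using S u v by (auto simp: Ind_def)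
  qed
  moreover have "blk ` S = {j. j < length Ws \<and> Ws ! j \<inter> S \<noteq> {}}"
    using blk SV cvp_block_unique[OF cvp] by blast
  ultimately show ?thesis by (metis card_image)
qed

text \<open>The new vertices w_j that may be added to an independent set S of G.\<close>
definition free_cliques :: "'a set list \<Rightarrow> 'a set \<Rightarrow> nat set" where
  "free_cliques Ws S = {j. j < length Ws \<and> Ws ! j \<inter> S = {}}"

lemma card_free_cliques:
  assumes cvp: "clique_vertex_partition V E Ws" and S: "S \<in> Ind V E"
  shows "card (free_cliques Ws S) = length Ws - card S" and "card S \<le> length Ws"
proof -
  have "free_cliques Ws S = {..<length Ws} - {j. j < length Ws \<and> Ws ! j \<inter> S \<noteq> {}}"
    by (auto simp: free_cliques_def)
  then show "card (free_cliques Ws S) = length Ws - card S"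
    by (simp add: card_Diff_subset card_cliques_met[OF cvp S] subset_eq)
  show "card S \<le> length Ws"
    using card_mono[of "{..<length Ws}" "{j. j < length Ws \<and> Ws ! j \<inter> S \<noteq> {}}"]
      card_cliques_met[OF cvp S] by auto
qed

lemma sum_set_decomp: "X = Inl ` (Inl -` X) \<union> Inr ` (Inr -` X)"
proof (rule set_eqI)
  fix x show "x \<in> X \<longleftrightarrow> x \<in> Inl ` (Inl -` X) \<union> Inr ` (Inr -` X)" by (cases x) auto
qed

lemma card_sum_split:
  fixes X :: "('a + 'b) set"
  assumes "finite X"
  shows "card X = card (Inl -` X) + card (Inr -` X)"
proof -
  have "card X = card (Inl ` (Inl -` X) \<union> Inr ` (Inr -` X))" using sum_set_decomp by metis
  also have "\<dots> = card (Inl ` (Inl -` X) :: ('a + 'b) set) + card (Inr ` (Inr -` X) :: ('a + 'b) set)"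
    by (rule card_Un_disjoint) (use assms in auto)
  also have "\<dots> = card (Inl -` X) + card (Inr -` X)"
    by (simp only: card_image inj_Inl inj_Inr)
  finally show ?thesis .
qed

lemma Ind_gpi_pair_iff:
  "Inl ` S \<union> Inr ` T \<in> Ind (gpi_V V Ws) (gpi_E E Ws) \<longleftrightarrow>
     S \<in> Ind V E \<and> T \<subseteq> free_cliques Ws S"
proof -
  let ?X = "Inl ` S \<union> Inr ` T"
  have vertices: "?X \<subseteq> gpi_V V Ws \<longleftrightarrow> S \<subseteq> V \<and> T \<subseteq> {..<length Ws}"
    unfolding gpi_V_def by auto
  have old_edges: "(\<forall>e\<in>(image Inl) ` E. \<not> e \<subseteq> ?X) \<longleftrightarrow> (\<forall>e\<in>E. \<not> e \<subseteq> S)"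
    by auto
  have whiskers: "(\<forall>e\<in>{{Inl v, Inr i} | v i. i < length Ws \<and> v \<in> Ws ! i}. \<not> e \<subseteq> ?X) \<longleftrightarrow>
      (\<forall>i\<in>T. i < length Ws \<longrightarrow> Ws ! i \<inter> S = {})"
    by auto
  show ?thesis
    unfolding Ind_def gpi_E_def free_cliques_def mem_Collect_eq ball_Un vertices old_edges whiskers
    by auto
qed

lemma Ind_gpi_iff:
  "X \<in> Ind (gpi_V V Ws) (gpi_E E Ws) \<longleftrightarrow>
     Inl -` X \<in> Ind V E \<and> Inr -` X \<subseteq> free_cliques Ws (Inl -` X)"
  by (subst (1) sum_set_decomp) (rule Ind_gpi_pair_iff)

section \<open>Face numbers and h-vector of Ind(G^pi)\<close>

lemma faces_Ind_gpi_bij: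
  assumes sg: "simple_graph V E"
  shows "bij_betw (\<lambda>X. (Inl -` X, Inr -` X)) {X \<in> Ind (gpi_V V Ws) (gpi_E E Ws). card X = i}
           (SIGMA S:Ind V E. {T. T \<subseteq> free_cliques Ws S \<and> card S + card T = i})"
    (is "bij_betw ?split ?faces ?pairs")
proof (rule bij_betw_byWitness[where f' = "\<lambda>(S, T). Inl ` S \<union> Inr ` T"])
  have finite_gpi_V: "finite (gpi_V V Ws)" using sg by (simp add: gpi_V_def simple_graph_def)
  show "\<forall>X\<in>?faces. (\<lambda>(S, T). Inl ` S \<union> Inr ` T) (?split X) = X"
    using sum_set_decomp by auto
  show "\<forall>p\<in>?pairs. ?split ((\<lambda>(S, T). Inl ` S \<union> Inr ` T) p) = p"
    by auto
  show "?split ` ?faces \<subseteq> ?pairs"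
  proof (rule image_subsetI)
    fix X assume "X \<in> ?faces"
    then have X: "X \<in> Ind (gpi_V V Ws) (gpi_E E Ws)" "card X = i" by auto
    then have "X \<subseteq> gpi_V V Ws" by (simp add: Ind_def)
    then have "card X = card (Inl -` X) + card (Inr -` X)"
      using finite_gpi_V by (intro card_sum_split) (rule finite_subset)
    moreover have "Inl -` X \<in> Ind V E \<and> Inr -` X \<subseteq> free_cliques Ws (Inl -` X)"
      using X(1) Ind_gpi_iff by blast
    ultimately show "?split X \<in> ?pairs" using X(2) by simp
  qed
  show "(\<lambda>(S, T). Inl ` S \<union> Inr ` T) ` ?pairs \<subseteq> ?faces"
  proof (rule image_subsetI)
    fix p assume "p \<in> ?pairs"
    then obtain S T where p: "p = (S, T)" and S: "S \<in> Ind V E"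
      and T: "T \<subseteq> free_cliques Ws S" "card S + card T = i"
      by auto
    then have face: "Inl ` S \<union> Inr ` T \<in> Ind (gpi_V V Ws) (gpi_E E Ws)"
      by (simp add: Ind_gpi_pair_iff)
    then have "finite (Inl ` S \<union> Inr ` T)"
      using finite_gpi_V finite_subset by (auto simp: Ind_def)
    moreover have "Inl -` (Inl ` S \<union> Inr ` T) = S" "Inr -` (Inl ` S \<union> Inr ` T) = T" by auto
    ultimately have "card (Inl ` S \<union> Inr ` T) = card S + card T"
      using card_sum_split[of "Inl ` S \<union> Inr ` T"] by simp
    then show "(\<lambda>(S, T). Inl ` S \<union> Inr ` T) p \<in> ?faces" using face T(2) p by simp
  qed
qed

text \<open>Hence f_{i-1}(Ind(G^pi)) = sum over independent sets S of G of
  binom(t - |S|, i - |S|): choose the i - |S| new vertices among the free ones.\<close>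
lemma nfaces_Ind_gpi:
  assumes sg: "simple_graph V E" and cvp: "clique_vertex_partition V E Ws"
  shows "nfaces (Ind (gpi_V V Ws) (gpi_E E Ws)) i =
     (\<Sum>S\<in>Ind V E. if card S \<le> i then (length Ws - card S) choose (i - card S) else 0)"
proof -
  have finite_free: "finite (free_cliques Ws S)" for S by (simp add: free_cliques_def)
  have "nfaces (Ind (gpi_V V Ws) (gpi_E E Ws)) i =
      card (SIGMA S:Ind V E. {T. T \<subseteq> free_cliques Ws S \<and> card S + card T = i})"
    unfolding nfaces_def using faces_Ind_gpi_bij[OF sg] by (rule bij_betw_same_card)
  also have "\<dots> = (\<Sum>S\<in>Ind V E. card {T. T \<subseteq> free_cliques Ws S \<and> card S + card T = i})"
    using finite_complex[OF simplicial_complex_Ind_graph[OF sg]] finite_free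
    by (intro card_SigmaI) (auto intro: finite_subset)
  also have "\<dots> = (\<Sum>S\<in>Ind V E. if card S \<le> i then (length Ws - card S) choose (i - card S) else 0)"
  proof (rule sum.cong)
    fix S assume S: "S \<in> Ind V E"
    show "card {T. T \<subseteq> free_cliques Ws S \<and> card S + card T = i} =
        (if card S \<le> i then (length Ws - card S) choose (i - card S) else 0)"
    proof (cases "card S \<le> i")
      case True
      then have "{T. T \<subseteq> free_cliques Ws S \<and> card S + card T = i} =
          {T. T \<subseteq> free_cliques Ws S \<and> card T = i - card S}" by auto
      then show ?thesis using True n_subsets[OF finite_free] card_free_cliques(1)[OF cvp S] by simp
    qed auto
  qed simp
  finally show ?thesis .
qed

text \<open>Ind(G^pi) has dimension t - 1: its faces have at most t elements, and
  the t new vertices form a face.\<close>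
lemma cx_d_Ind_gpi:
  assumes sg: "simple_graph V E" and cvp: "clique_vertex_partition V E Ws"
  shows "cx_d (Ind (gpi_V V Ws) (gpi_E E Ws)) = length Ws"
proof -
  let ?G = "Ind (gpi_V V Ws) (gpi_E E Ws)"
  have "finite (gpi_V V Ws)" using sg by (simp add: gpi_V_def simple_graph_def)
  moreover have "{} \<notin> gpi_E E Ws" using sg by (auto simp: gpi_E_def simple_graph_def)
  ultimately have sc: "simplicial_complex (gpi_V V Ws) ?G" by (rule simplicial_complex_Ind)
  have bound: "card X \<le> length Ws" if X: "X \<in> ?G" for X
  proof -
    have indep: "Inl -` X \<in> Ind V E" and free: "Inr -` X \<subseteq> free_cliques Ws (Inl -` X)"
      using X Ind_gpi_iff by blast+
    have "finite X" using sc X finite_subset by (auto simp: simplicial_complex_def)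
    then have "card X = card (Inl -` X) + card (Inr -` X)" by (rule card_sum_split)
    also have "card (Inr -` X) \<le> card (free_cliques Ws (Inl -` X))"
      using free by (rule card_mono[rotated]) (simp add: free_cliques_def)
    also have "\<dots> = length Ws - card (Inl -` X)" using card_free_cliques(1)[OF cvp indep] .
    finally show ?thesis using card_free_cliques(2)[OF cvp indep] by simp
  qed
  have "{} \<in> Ind V E" using sg by (auto simp: Ind_def simple_graph_def)
  moreover have "{..<length Ws} \<subseteq> free_cliques Ws {}" by (auto simp: free_cliques_def)
  ultimately have "Inl ` {} \<union> Inr ` {..<length Ws} \<in> ?G" by (simp only: Ind_gpi_pair_iff)
  then have "length Ws \<le> cx_d ?G"
    using card_le_cx_d[OF sc, of "Inr ` {..<length Ws}"] by (simp add: card_image)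
  moreover obtain \<sigma> where "\<sigma> \<in> ?G" "card \<sigma> = cx_d ?G" using cx_d_attained[OF sc] .
  ultimately show ?thesis using bound by force
qed

lemma h_vector_Ind_gpi:
  assumes sg: "simple_graph V E" and cvp: "clique_vertex_partition V E Ws"
  shows "h_vector (Ind (gpi_V V Ws) (gpi_E E Ws)) =
    map (\<lambda>j. int (nfaces (Ind V E) j)) [0..<length Ws + 1]"
  unfolding h_vector_def Let_def cx_d_Ind_gpi[OF sg cvp]
proof (rule map_cong[OF refl])
  let ?t = "length Ws"
  fix j assume "j \<in> set [0..<?t + 1]"
  then have j: "j \<le> ?t" by auto
  have "(\<Sum>i=0..j. (-1) ^ (j - i) * int ((?t - i) choose (j - i)) *
          int (nfaces (Ind (gpi_V V Ws) (gpi_E E Ws)) i))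
     = (\<Sum>i=0..j. \<Sum>S\<in>Ind V E. (-1::int) ^ (j - i) * int ((?t - i) choose (j - i)) *
          int (if card S \<le> i then (?t - card S) choose (i - card S) else 0))"
    by (simp only: nfaces_Ind_gpi[OF sg cvp] of_nat_sum sum_distrib_left)
  also have "\<dots> = (\<Sum>S\<in>Ind V E. \<Sum>i=0..j. (-1::int) ^ (j - i) * int ((?t - i) choose (j - i)) *
          int (if card S \<le> i then (?t - card S) choose (i - card S) else 0))"
    by (rule sum.swap)
  also have "\<dots> = (\<Sum>S\<in>Ind V E. if card S = j then 1 else 0)"
    using choose_inversion[OF card_free_cliques(2)[OF cvp] j] by (intro sum.cong) auto
  also have "\<dots> = int (nfaces (Ind V E) j)"
    using finite_complex[OF simplicial_complex_Ind_graph[OF sg]]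
    by (simp add: nfaces_def sum.inter_filter[symmetric])
  finally show "(\<Sum>i=0..j. (-1) ^ (j - i) * int ((?t - i) choose (j - i)) *
          int (nfaces (Ind (gpi_V V Ws) (gpi_E E Ws)) i)) = int (nfaces (Ind V E) j)" .
qed

lemma stripped_h_vector_Ind_gpi:
  assumes sg: "simple_graph V E" and cvp: "clique_vertex_partition V E Ws"
  shows "strip_trailing_zeros (h_vector (Ind (gpi_V V Ws) (gpi_E E Ws))) = map int (face_vector (Ind V E))"
proof -
  have sc: "simplicial_complex V (Ind V E)" using sg by (rule simplicial_complex_Ind_graph)
  obtain S where "S \<in> Ind V E" "card S = cx_d (Ind V E)" using cx_d_attained[OF sc] .
  then have "cx_d (Ind V E) \<le> length Ws" using card_free_cliques(2)[OF cvp] by metis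
  then show ?thesis
    unfolding h_vector_Ind_gpi[OF sg cvp] by (rule strip_padded_face_vector[OF sc])
qed

lemma clique_vertex_partition_trivial:
  assumes "finite (V::'a::linorder set)"
  shows "clique_vertex_partition V E (trivial_partition V)"
proof -
  let ?xs = "sorted_list_of_set V"
  have distinct: "distinct ?xs" and set: "set ?xs = V" using assms by auto
  have "distinct (map (\<lambda>v. {v}) ?xs)" using distinct by (simp add: distinct_map inj_on_def)
  moreover have "\<forall>i<length ?xs. \<forall>j<length ?xs. i \<noteq> j \<longrightarrow> {?xs ! i} \<inter> {?xs ! j} = {}"
    using distinct by (auto simp: nth_eq_iff_index_eq)
  ultimately show ?thesis
    using set unfolding clique_vertex_partition_def trivial_partition_def is_clique_def by auto
qed

theorem theorem3p6:
  fixes f :: "nat list"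
  assumes "\<forall>x\<in>set f. x > 0"
  shows "((\<exists>(V::nat set) \<Delta>. V \<noteq> {} \<and> flag_complex V \<Delta> \<and> f = face_vector \<Delta>)
           \<longleftrightarrow>
          (\<exists>(V::nat set) E Ws. simple_graph V E \<and> V \<noteq> {} \<and> clique_vertex_partition V E Ws \<and>
              map int f = strip_trailing_zeros (h_vector (Ind (gpi_V V Ws) (gpi_E E Ws)))))
       \<and> ((\<exists>(V::nat set) E Ws. simple_graph V E \<and> V \<noteq> {} \<and> clique_vertex_partition V E Ws \<and>
              map int f = strip_trailing_zeros (h_vector (Ind (gpi_V V Ws) (gpi_E E Ws))))
           \<longleftrightarrow>
          (\<exists>(V::nat set) E. simple_graph V E \<and> V \<noteq> {} \<and>
              map int f = strip_trailing_zeros (h_vector (Ind (gpi_V V (trivial_partition V))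
                                                              (gpi_E E (trivial_partition V))))))"
  (is "(?flag \<longleftrightarrow> ?partition) \<and> (?partition \<longleftrightarrow> ?whiskered)")
proof -
  let ?graph = "\<exists>(V::nat set) E. simple_graph V E \<and> V \<noteq> {} \<and> f = face_vector (Ind V E)"
  have h_vector_match: "map int f = strip_trailing_zeros (h_vector (Ind (gpi_V V Ws) (gpi_E E Ws)))
      \<longleftrightarrow> f = face_vector (Ind V E)"
    if "simple_graph V E" "clique_vertex_partition V E Ws" for V :: "nat set" and E Ws
    unfolding stripped_h_vector_Ind_gpi[OF that] by (simp add: inj_map_eq_map inj_def)
  have trivial: "clique_vertex_partition V E (trivial_partition V)"
    if "simple_graph V E" for V :: "nat set" and E
    using that by (intro clique_vertex_partition_trivial) (simp add: simple_graph_def)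
  have "?flag \<longleftrightarrow> ?graph" by (rule flag_face_vector_iff_graph)
  moreover have "?partition \<longleftrightarrow> ?graph"
  proof
    assume ?partition
    then show ?graph using h_vector_match by blast
  next
    assume ?graph
    then show ?partition using h_vector_match trivial by blast
  qed
  moreover have "?whiskered \<longleftrightarrow> ?graph"
  proof
    assume ?whiskered
    then show ?graph using h_vector_match trivial by blast
  next
    assume ?graph
    then show ?whiskered using h_vector_match trivial by blast
  qed
  ultimately show ?thesis by blast
qed

end
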